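(* Let $G$ be a graph of tree-width $\le w\in\mathbb N$, and let $\sigma$ be a finite star of separations of $G$ of order $\le w+1$ whose interior is finite. Suppose that all separations in $\sigma$ are left-$\ell$-robust for $\ell:=(w+1)^2(w+2)+w+1$. Then $\mathrm{torso}(\sigma)$ has tree-width $\le w$.
   Context: Graphs may be infinite. A separation of $G$ is a set $\{A,B\}$ with $A,B\subseteq V(G)$, $A\cup B=V(G)$ and no edge of $G$ between $A\setminus B$ and $B\setminus A$; its order is $|A\cap B|$; its orientations are $(A,B)$ and $(B,A)$, ordered by $(A,B)\le(C,D)$ iff $A\subseteq C$ and $B\supseteq D$. A star is a set $\sigma$ of oriented finite-order separations, not containing $(V(G),V(G))$, with $(A,B)\le(D,C)$ for any two distinct $(A,B),(C,D)\in\sigma$; its interior is $\mathrm{int}(\sigma)=\bigcap_{(A,B)\in\sigma}B$. $\mathrm{torso}(\sigma)$ is the graph obtained from $G[\mathrm{int}(\sigma)]$ by adding an edge $uv$ whenever distinct $u,v\in\mathrm{int}(\sigma)$ both lie in $A\cap B$ for some $(A,B)\in\sigma$. A finite-order $(A,B)$ is left-$\ell$-robust if there exist a set $U\subseteq A$ of size $\ell$ and pairwise disjoint paths $P_x\subseteq G[A]$ ($x\in A\cap B$) with $P_x$ ending in $x$, such that for each $x$ there are $\ell$ $U$–$P_x$ paths in $G[(A\setminus B)\cup\{x\}]$ meeting pairwise at most in their endvertices on $P_x$. A graph has tree-width $\le w$ if it has a tree-decomposition all of whose bags have at most $w+1$ vertices. *)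

theory Defs
  imports Main
begin

definition graph :: "'a set \<Rightarrow> ('a \<Rightarrow> 'a \<Rightarrow> bool) \<Rightarrow> bool" where
  "graph V E \<longleftrightarrow> (\<forall>u v. E u v \<longrightarrow> u \<in> V \<and> v \<in> V \<and> u \<noteq> v \<and> E v u)"

definition is_path :: "'a set \<Rightarrow> ('a \<Rightarrow> 'a \<Rightarrow> bool) \<Rightarrow> 'a list \<Rightarrow> bool" where
  "is_path S E p \<longleftrightarrow> p \<noteq> [] \<and> distinct p \<and> set p \<subseteq> S \<and>
     (\<forall>i. Suc i < length p \<longrightarrow> E (p ! i) (p ! Suc i))"

definition is_tree :: "'t set \<Rightarrow> ('t \<Rightarrow> 't \<Rightarrow> bool) \<Rightarrow> bool" where
  "is_tree T TE \<longleftrightarrow> graph T TE \<and> T \<noteq> {} \<and>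
     (\<forall>u\<in>T. \<forall>v\<in>T. \<exists>!p. is_path T TE p \<and> hd p = u \<and> last p = v)"

definition tree_decomposition ::
  "'a set \<Rightarrow> ('a \<Rightarrow> 'a \<Rightarrow> bool) \<Rightarrow> 't set \<Rightarrow> ('t \<Rightarrow> 't \<Rightarrow> bool) \<Rightarrow> ('t \<Rightarrow> 'a set) \<Rightarrow> bool" where
  "tree_decomposition V E T TE bag \<longleftrightarrow> is_tree T TE \<and>
     (\<forall>t\<in>T. bag t \<subseteq> V) \<and>
     V = (\<Union>t\<in>T. bag t) \<and>
     (\<forall>u v. E u v \<longrightarrow> (\<exists>t\<in>T. u \<in> bag t \<and> v \<in> bag t)) \<and>
     (\<forall>p i. is_path T TE p \<and> i < length p \<longrightarrow> bag (hd p) \<inter> bag (last p) \<subseteq> bag (p ! i))"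

text \<open>Tree-width at most w, witnessed by a tree-decomposition whose tree has nodes of type 't.\<close>
definition treewidth_le :: "'t itself \<Rightarrow> 'a set \<Rightarrow> ('a \<Rightarrow> 'a \<Rightarrow> bool) \<Rightarrow> nat \<Rightarrow> bool" where
  "treewidth_le _ V E w \<longleftrightarrow> (\<exists>(T::'t set) TE bag. tree_decomposition V E T TE bag \<and>
     (\<forall>t\<in>T. finite (bag t) \<and> card (bag t) \<le> w + 1))"

definition separation :: "'a set \<Rightarrow> ('a \<Rightarrow> 'a \<Rightarrow> bool) \<Rightarrow> 'a set \<Rightarrow> 'a set \<Rightarrow> bool" where
  "separation V E A B \<longleftrightarrow> A \<subseteq> V \<and> B \<subseteq> V \<and> A \<union> B = V \<and>
     (\<forall>u v. E u v \<and> u \<in> A - B \<longrightarrow> v \<notin> B - A)"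

definition sep_order :: "'a set \<times> 'a set \<Rightarrow> nat" where
  "sep_order s = card (fst s \<inter> snd s)"

definition is_star :: "'a set \<Rightarrow> ('a \<Rightarrow> 'a \<Rightarrow> bool) \<Rightarrow> ('a set \<times> 'a set) set \<Rightarrow> bool" where
  "is_star V E \<sigma> \<longleftrightarrow>
     (\<forall>(A,B)\<in>\<sigma>. separation V E A B \<and> finite (A \<inter> B)) \<and>
     (V, V) \<notin> \<sigma> \<and>
     (\<forall>(A,B)\<in>\<sigma>. \<forall>(C,D)\<in>\<sigma>. (A,B) \<noteq> (C,D) \<longrightarrow> A \<subseteq> D \<and> C \<subseteq> B)"

text \<open>Interior of a star (the intersection over the empty star is V).\<close>
definition star_int :: "'a set \<Rightarrow> ('a set \<times> 'a set) set \<Rightarrow> 'a set" where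
  "star_int V \<sigma> = V \<inter> (\<Inter>(A,B)\<in>\<sigma>. B)"

definition torso_edges :: "'a set \<Rightarrow> ('a \<Rightarrow> 'a \<Rightarrow> bool) \<Rightarrow> ('a set \<times> 'a set) set \<Rightarrow> 'a \<Rightarrow> 'a \<Rightarrow> bool" where
  "torso_edges V E \<sigma> u v \<longleftrightarrow> u \<in> star_int V \<sigma> \<and> v \<in> star_int V \<sigma> \<and>
     (E u v \<or> (u \<noteq> v \<and> (\<exists>(A,B)\<in>\<sigma>. u \<in> A \<inter> B \<and> v \<in> A \<inter> B)))"

text \<open>Left-l-robustness of a finite-order separation (A,B). A U--X path meets U exactly in its
  first vertex and X exactly in its last vertex.\<close>
definition left_robust :: "('a \<Rightarrow> 'a \<Rightarrow> bool) \<Rightarrow> nat \<Rightarrow> 'a set \<Rightarrow> 'a set \<Rightarrow> bool" where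
  "left_robust E l A B \<longleftrightarrow> (\<exists>U P.
     U \<subseteq> A \<and> finite U \<and> card U = l \<and>
     (\<forall>x\<in>A \<inter> B. is_path A E (P x) \<and> last (P x) = x) \<and>
     (\<forall>x\<in>A \<inter> B. \<forall>y\<in>A \<inter> B. x \<noteq> y \<longrightarrow> set (P x) \<inter> set (P y) = {}) \<and>
     (\<forall>x\<in>A \<inter> B. \<exists>Q. finite Q \<and> card Q = l \<and>
        (\<forall>q\<in>Q. is_path ((A - B) \<union> {x}) E q \<and> set q \<inter> U = {hd q} \<and>
                 set q \<inter> set (P x) = {last q}) \<and>
        (\<forall>q\<in>Q. \<forall>q'\<in>Q. q \<noteq> q' \<longrightarrow> set q \<inter> set q' \<subseteq> {last q, last q'})))"

end

theory Submission
  imports Defs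
begin

text \<open>Every torso vertex \<open>v\<close> is represented by its branch set: \<open>v\<close> together with the
  paths \<open>P\<^sub>v\<close> witnessing left-robustness of the separations \<open>(A, B) \<in> \<sigma>\<close> with \<open>v \<in> A \<inter> B\<close>.
  Branch sets are connected and, by the star property, pairwise disjoint. Keep the tree of a
  tree-decomposition of \<open>G\<close> of width \<open>\<le> w\<close> and give each node the torso vertices whose branch set
  meets its old bag: disjointness keeps the bags no larger, connectedness preserves the
  path condition, and edges of \<open>G\<close> stay covered. A torso edge \<open>uv\<close> inside some \<open>A \<inter> B\<close> is
  covered once some bag meets both \<open>P\<^sub>u\<close> and \<open>P\<^sub>v\<close>. If none did, a tree edge \<open>ac\<close> would separate
  \<open>P\<^sub>u\<close> from \<open>P\<^sub>v\<close> by \<open>S = bag a \<inter> bag c\<close>, \<open>|S| \<le> w + 1\<close>. Each of the two fans of \<open>\<ell>\<close> paths from \<open>U\<close>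
  to \<open>P\<^sub>u\<close> and to \<open>P\<^sub>v\<close> loses at most \<open>|S|\<close> paths to \<open>S\<close>; as \<open>\<ell> > 2(w + 1)\<close>, two survivors start
  at the same vertex of \<open>U\<close> and join \<open>P\<^sub>u\<close> to \<open>P\<^sub>v\<close> outside \<open>S\<close>. Finally, as the torso is finite, a
  finite subtree of the decomposition suffices, and its nodes can be renamed by natural numbers.\<close>

section \<open>Paths\<close>

lemma is_path_nonempty: "is_path S E p \<Longrightarrow> p \<noteq> []"
  unfolding is_path_def by simp

lemma is_path_set: "is_path S E p \<Longrightarrow> set p \<subseteq> S"
  unfolding is_path_def by simp

lemma is_path_edge: "is_path S E p \<Longrightarrow> Suc i < length p \<Longrightarrow> E (p ! i) (p ! Suc i)"
  unfolding is_path_def by simp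

lemma is_path_take: "is_path S E p \<Longrightarrow> 0 < n \<Longrightarrow> is_path S E (take n p)"
  unfolding is_path_def by (auto dest: in_set_takeD)

lemma is_path_drop: "is_path S E p \<Longrightarrow> n < length p \<Longrightarrow> is_path S E (drop n p)"
  unfolding is_path_def by (auto dest: in_set_dropD)

lemma is_path_Cons:
  "is_path S E p \<Longrightarrow> x \<in> S \<Longrightarrow> x \<notin> set p \<Longrightarrow> E x (hd p) \<Longrightarrow> is_path S E (x # p)"
  unfolding is_path_def by (auto simp: nth_Cons hd_conv_nth split: nat.splits)

lemma is_path_mono: "is_path S E p \<Longrightarrow> set p \<subseteq> S' \<Longrightarrow> is_path S' E p"
  unfolding is_path_def by auto

lemma is_path_singleton: "x \<in> S \<Longrightarrow> is_path S E [x]"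
  unfolding is_path_def by auto

lemma is_path_pair: "x \<in> S \<Longrightarrow> y \<in> S \<Longrightarrow> x \<noteq> y \<Longrightarrow> E x y \<Longrightarrow> is_path S E [x, y]"
  unfolding is_path_def by (auto simp: less_Suc_eq)

lemma is_path_rev:
  assumes "is_path S E p" and "\<And>u v. E u v \<Longrightarrow> E v u"
  shows "is_path S E (rev p)"
  unfolding is_path_def
proof (intro conjI allI impI)
  fix i assume i: "Suc i < length (rev p)"
  have "E (p ! (length p - Suc (Suc i))) (p ! Suc (length p - Suc (Suc i)))"
    using is_path_edge[OF assms(1)] i by simp
  moreover have "Suc (length p - Suc (Suc i)) = length p - Suc i"
    using i by auto
  ultimately show "E (rev p ! i) (rev p ! Suc i)"
    using i assms(2) by (auto simp: rev_nth)
qed (use assms in \<open>auto simp: is_path_def\<close>)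

lemma is_path_restrict:
  "S \<subseteq> T \<Longrightarrow> is_path S (\<lambda>u v. E u v \<and> u \<in> S \<and> v \<in> S) p \<longleftrightarrow> is_path T E p \<and> set p \<subseteq> S"
  unfolding is_path_def by (auto dest: nth_mem)

lemma is_path_map:
  assumes p: "is_path S E p" and inj: "inj_on g S"
    and edge: "\<And>a b. a \<in> S \<Longrightarrow> b \<in> S \<Longrightarrow> E a b \<Longrightarrow> E' (g a) (g b)"
  shows "is_path (g ` S) E' (map g p)"
  unfolding is_path_def
proof (intro conjI allI impI)
  have p': "set p \<subseteq> S" "distinct p" "p \<noteq> []"
    using p unfolding is_path_def by auto
  then show "map g p \<noteq> []" "distinct (map g p)" "set (map g p) \<subseteq> g ` S"
    using inj by (auto simp: distinct_map inj_on_subset)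
  fix i assume "Suc i < length (map g p)"
  then show "E' (map g p ! i) (map g p ! Suc i)"
    using edge is_path_edge[OF p] p'(1) by (simp add: subset_iff)
qed

lemma list_exit_step:
  assumes "xs \<noteq> []" and "P (hd xs)" and "\<not> P (last xs)"
  shows "\<exists>i. Suc i < length xs \<and> P (xs ! i) \<and> \<not> P (xs ! Suc i)"
  using assms
proof (induction xs rule: induct_list012)
  case (3 x y zs)
  show ?case
  proof (cases "P y")
    case True
    then obtain i where "Suc i < length (y # zs)" "P ((y # zs) ! i)" "\<not> P ((y # zs) ! Suc i)"
      using "3.IH"(2) "3.prems"(3) by auto
    then show ?thesis by (intro exI[of _ "Suc i"]) auto
  qed (use "3.prems" in auto)
qed auto

section \<open>Trees and the two sides of a tree edge\<close>

lemma tree_edge_sym: "is_tree T TE \<Longrightarrow> TE u v \<Longrightarrow> TE v u"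
  unfolding is_tree_def graph_def by blast

lemma tree_edge_in: "is_tree T TE \<Longrightarrow> TE u v \<Longrightarrow> u \<in> T \<and> v \<in> T \<and> u \<noteq> v"
  unfolding is_tree_def graph_def by blast

definition tree_path :: "'t set \<Rightarrow> ('t \<Rightarrow> 't \<Rightarrow> bool) \<Rightarrow> 't \<Rightarrow> 't \<Rightarrow> 't list" where
  "tree_path T TE s t = (THE p. is_path T TE p \<and> hd p = s \<and> last p = t)"

lemma tree_path:
  assumes "is_tree T TE" "s \<in> T" "t \<in> T"
  shows "is_path T TE (tree_path T TE s t) \<and> hd (tree_path T TE s t) = s \<and> last (tree_path T TE s t) = t"
proof -
  have "\<exists>!p. is_path T TE p \<and> hd p = s \<and> last p = t"
    using assms unfolding is_tree_def by blast
  then show ?thesis unfolding tree_path_def by (rule theI')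
qed

lemma tree_path_unique:
  assumes "is_tree T TE" "is_path T TE p" "hd p = s" "last p = t"
  shows "tree_path T TE s t = p"
proof -
  have "s \<in> T" "t \<in> T"
    using assms(2-4) is_path_nonempty[OF assms(2)] is_path_set[OF assms(2)] by auto
  then have "\<exists>!p. is_path T TE p \<and> hd p = s \<and> last p = t"
    using assms(1) unfolding is_tree_def by blast
  then show ?thesis unfolding tree_path_def by (rule the1_equality) (use assms(2-4) in simp)
qed

lemma tree_path_suffix:
  assumes "is_tree T TE" "t \<in> T" "a \<in> T" "x \<in> set (tree_path T TE t a)"
  shows "set (tree_path T TE x a) \<subseteq> set (tree_path T TE t a)"
proof -
  let ?p = "tree_path T TE t a"
  have p: "is_path T TE ?p" "last ?p = a" using tree_path assms(1-3) by metis+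
  obtain k where k: "k < length ?p" "?p ! k = x" using assms(4) by (auto simp: in_set_conv_nth)
  have "tree_path T TE x a = drop k ?p"
    using tree_path_unique[OF assms(1) is_path_drop[OF p(1) k(1)]] k p by (simp add: hd_drop_conv_nth)
  then show ?thesis by (simp add: set_drop_subset)
qed

text \<open>For a tree edge \<open>ac\<close>, \<open>on_side T TE a c t\<close> says that \<open>t\<close> lies in the component of
  \<open>T - ac\<close> containing \<open>a\<close>.\<close>
definition on_side :: "'t set \<Rightarrow> ('t \<Rightarrow> 't \<Rightarrow> bool) \<Rightarrow> 't \<Rightarrow> 't \<Rightarrow> 't \<Rightarrow> bool" where
  "on_side T TE a c t \<longleftrightarrow> c \<notin> set (tree_path T TE t a)"

lemma on_side_self:
  assumes "is_tree T TE" "TE a c"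
  shows "on_side T TE a c a"
proof -
  have "a \<in> T" "a \<noteq> c" using tree_edge_in[OF assms] by auto
  then show ?thesis
    using tree_path_unique[OF assms(1) is_path_singleton] unfolding on_side_def by force
qed

lemma on_side_step:
  assumes tree: "is_tree T TE" and ac: "TE a c" and tt': "TE t t'"
    and not_ac: "{t, t'} \<noteq> {a, c}" and side: "on_side T TE a c t"
  shows "on_side T TE a c t'"
proof -
  have in_T: "a \<in> T" "c \<in> T" "t \<in> T" "t' \<in> T"
    using tree_edge_in[OF tree ac] tree_edge_in[OF tree tt'] by auto
  let ?p = "tree_path T TE t a"
  have p: "is_path T TE ?p" "hd ?p = t" "last ?p = a" using tree_path tree in_T by metis+
  have c: "c \<notin> set ?p" using side unfolding on_side_def .
  show ?thesis
  proof (cases "t' \<in> set ?p")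
    case True
    then show ?thesis using tree_path_suffix[OF tree in_T(3,1) True] c unfolding on_side_def by blast
  next
    case False
    have "is_path T TE (t' # ?p)"
      using is_path_Cons[OF p(1) in_T(4) False] tree_edge_sym[OF tree tt'] p(2) by simp
    then have t'_path: "tree_path T TE t' a = t' # ?p"
      using tree_path_unique[OF tree] is_path_nonempty[OF p(1)] p(3) by simp
    show ?thesis
    proof (rule ccontr)
      assume "\<not> on_side T TE a c t'"
      then have "t' = c" using t'_path c unfolding on_side_def by auto
      have "is_path T TE [c, a]"
        using is_path_pair in_T tree_edge_in[OF tree ac] tree_edge_sym[OF tree ac] by metis
      then have "tree_path T TE c a = [c, a]" using tree_path_unique[OF tree] by fastforce
      then have "?p = [a]" using t'_path \<open>t' = c\<close> by simp
      then show False using p(2) not_ac \<open>t' = c\<close> by auto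
    qed
  qed
qed

lemma on_side_path:
  assumes tree: "is_tree T TE" and ac: "TE a c" and p: "is_path T TE p"
    and side: "on_side T TE a c (hd p)" and not_ac: "\<not> (a \<in> set p \<and> c \<in> set p)"
  shows "on_side T TE a c (last p)"
proof -
  have "on_side T TE a c (p ! j)" if "j < length p" for j
    using that
  proof (induction j)
    case 0
    then show ?case using side by (simp add: hd_conv_nth)
  next
    case (Suc j)
    have "{p ! j, p ! Suc j} \<noteq> {a, c}" using not_ac Suc.prems by (auto simp: doubleton_eq_iff)
    then show ?case using on_side_step[OF tree ac is_path_edge[OF p Suc.prems]] Suc by auto
  qed
  then show ?thesis using is_path_nonempty[OF p] by (simp add: last_conv_nth)
qed

lemma on_side_path_iff:
  assumes tree: "is_tree T TE" and ac: "TE a c" and p: "is_path T TE p" and c: "c \<notin> set p"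
  shows "on_side T TE a c (hd p) \<longleftrightarrow> on_side T TE a c (last p)"
proof
  show "on_side T TE a c (last p)" if "on_side T TE a c (hd p)"
    using on_side_path[OF tree ac p that] c by blast
  have "is_path T TE (rev p)" using is_path_rev[OF p tree_edge_sym[OF tree]] .
  then show "on_side T TE a c (hd p)" if "on_side T TE a c (last p)"
    using on_side_path[OF tree ac] c that is_path_nonempty[OF p] by (fastforce simp: hd_rev last_rev)
qed

lemma path_crosses_edge:
  assumes tree: "is_tree T TE" and p: "is_path T TE p" and i: "Suc i < length p"
  shows "TE (p ! i) (p ! Suc i) \<and> on_side T TE (p ! i) (p ! Suc i) (hd p)
    \<and> \<not> on_side T TE (p ! i) (p ! Suc i) (last p)"
proof -
  have d: "distinct p" "p \<noteq> []" using p unfolding is_path_def by auto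
  have "last (take (Suc i) p) = p ! i" using i by (simp add: take_Suc_conv_app_nth)
  then have "tree_path T TE (hd p) (p ! i) = take (Suc i) p"
    using tree_path_unique[OF tree is_path_take[OF p, of "Suc i"]] by simp
  moreover have "p ! Suc i \<notin> set (take (Suc i) p)"
    using d(1) i by (simp add: in_set_conv_nth nth_eq_iff_index_eq)
  ultimately have "on_side T TE (p ! i) (p ! Suc i) (hd p)" unfolding on_side_def by simp
  moreover
  have "is_path T TE (rev (drop i p))"
    using is_path_rev[OF is_path_drop[OF p] tree_edge_sym[OF tree]] i by simp
  then have "tree_path T TE (last p) (p ! i) = rev (drop i p)"
    using tree_path_unique[OF tree] i by (simp add: hd_rev last_rev hd_drop_conv_nth)
  moreover have "p ! Suc i \<in> set (drop i p)"
    using i by (metis Cons_nth_drop_Suc Suc_lessD list.set_intros)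
  ultimately show ?thesis using is_path_edge[OF p i] unfolding on_side_def by simp
qed

lemma tree_edge_leaving:
  assumes tree: "is_tree T TE" and t: "t \<in> T" "X t" and t': "t' \<in> T" "\<not> X t'"
  obtains a c where "TE a c" "a \<in> T" "X a" "\<not> X c" "\<not> on_side T TE a c t'"
proof -
  let ?p = "tree_path T TE t t'"
  have p: "is_path T TE ?p" "hd ?p = t" "last ?p = t'" using tree_path[OF tree t(1) t'(1)] by auto
  obtain i where i: "Suc i < length ?p" "X (?p ! i)" "\<not> X (?p ! Suc i)"
    using list_exit_step[OF is_path_nonempty[OF p(1)], where P = X] p(2,3) t(2) t'(2) by auto
  have a: "?p ! i \<in> T" using is_path_set[OF p(1)] i(1) by (simp add: subset_iff)
  note cross = path_crosses_edge[OF tree p(1) i(1)]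
  then have "\<not> on_side T TE (?p ! i) (?p ! Suc i) t'" using p(3) by simp
  then show ?thesis using that[OF conjunct1[OF cross] a i(2,3)] by blast
qed

section \<open>Connected sets and tree-decompositions\<close>

definition edges_within :: "('a \<Rightarrow> 'a \<Rightarrow> bool) \<Rightarrow> 'a set \<Rightarrow> ('a \<times> 'a) set" where
  "edges_within E W = {(u, v). E u v \<and> u \<in> W \<and> v \<in> W}"

definition connected_set :: "('a \<Rightarrow> 'a \<Rightarrow> bool) \<Rightarrow> 'a set \<Rightarrow> bool" where
  "connected_set E W \<longleftrightarrow> (\<forall>x\<in>W. \<forall>y\<in>W. (x, y) \<in> (edges_within E W)\<^sup>*)"

lemma rtrancl_edges_within_sym:
  assumes "symp E" and "(x, y) \<in> (edges_within E W)\<^sup>*"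
  shows "(y, x) \<in> (edges_within E W)\<^sup>*"
proof -
  have "sym (edges_within E W)" unfolding sym_def edges_within_def using assms(1) by (blast dest: sympD)
  then show ?thesis using assms(2) by (meson sym_rtrancl symD)
qed

lemma rtrancl_edges_within_mono:
  "W \<subseteq> W' \<Longrightarrow> (x, y) \<in> (edges_within E W)\<^sup>* \<Longrightarrow> (x, y) \<in> (edges_within E W')\<^sup>*"
  by (rule rtrancl_mono[THEN subsetD, rotated]) (auto simp: edges_within_def)

lemma path_rtrancl_edges_within:
  assumes p: "is_path S E p" and W: "set p \<subseteq> W" and sym: "symp E"
    and x: "x \<in> set p" and y: "y \<in> set p"
  shows "(x, y) \<in> (edges_within E W)\<^sup>*"
proof -
  have from_hd: "(p ! 0, p ! i) \<in> (edges_within E W)\<^sup>*" if "i < length p" for i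
    using that
  proof (induction i)
    case (Suc i)
    have "(p ! i, p ! Suc i) \<in> edges_within E W"
      using is_path_edge[OF p Suc.prems] W Suc.prems nth_mem[of i p] nth_mem[of "Suc i" p]
      unfolding edges_within_def by auto
    then show ?case using Suc by (auto intro: rtrancl_into_rtrancl)
  qed simp
  obtain i j where i: "i < length p" "p ! i = x" and j: "j < length p" "p ! j = y"
    using x y by (auto simp: in_set_conv_nth)
  have "(x, p ! 0) \<in> (edges_within E W)\<^sup>*"
    using rtrancl_edges_within_sym[OF sym from_hd[OF i(1)]] i(2) by simp
  then show ?thesis using from_hd[OF j(1)] j(2) by simp
qed

lemma td_tree: "tree_decomposition V E T TE bag \<Longrightarrow> is_tree T TE"
  unfolding tree_decomposition_def by blast

lemma td_bag_subset: "tree_decomposition V E T TE bag \<Longrightarrow> t \<in> T \<Longrightarrow> bag t \<subseteq> V"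
  unfolding tree_decomposition_def by blast

lemma td_cover: "tree_decomposition V E T TE bag \<Longrightarrow> x \<in> V \<Longrightarrow> \<exists>t\<in>T. x \<in> bag t"
  unfolding tree_decomposition_def by blast

lemma td_edge: "tree_decomposition V E T TE bag \<Longrightarrow> E u v \<Longrightarrow> \<exists>t\<in>T. u \<in> bag t \<and> v \<in> bag t"
  unfolding tree_decomposition_def by blast

lemma td_path_bag:
  "tree_decomposition V E T TE bag \<Longrightarrow> is_path T TE p \<Longrightarrow> x \<in> bag (hd p) \<Longrightarrow> x \<in> bag (last p)
    \<Longrightarrow> i < length p \<Longrightarrow> x \<in> bag (p ! i)"
  unfolding tree_decomposition_def by blast

lemma td_bags_on_side:
  assumes td: "tree_decomposition V E T TE bag" and ac: "TE a c"
    and x: "x \<notin> bag a \<inter> bag c" "x \<in> bag t" "x \<in> bag t'" and t: "t \<in> T" "t' \<in> T"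
    and side: "on_side T TE a c t"
  shows "on_side T TE a c t'"
proof (rule ccontr)
  assume not_side: "\<not> on_side T TE a c t'"
  have tree: "is_tree T TE" using td by (rule td_tree)
  let ?p = "tree_path T TE t t'"
  have p: "is_path T TE ?p" "hd ?p = t" "last ?p = t'" using tree_path[OF tree t] by auto
  have "a \<in> set ?p" "c \<in> set ?p" using on_side_path[OF tree ac p(1)] side not_side p by auto
  then obtain i j where "i < length ?p" "?p ! i = a" "j < length ?p" "?p ! j = c"
    by (auto simp: in_set_conv_nth)
  then have "x \<in> bag a" "x \<in> bag c" using td_path_bag[OF td p(1)] p x(2,3) by metis+
  then show False using x(1) by blast
qed

lemma td_tree_edge_separates:
  assumes td: "tree_decomposition V E T TE bag" and ac: "TE a c"
    and xy: "(x, y) \<in> (edges_within E (- (bag a \<inter> bag c)))\<^sup>*" and x: "x \<notin> bag a \<inter> bag c"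
    and t: "t \<in> T" "x \<in> bag t" "on_side T TE a c t"
    and t': "t' \<in> T" "y \<in> bag t'"
  shows "on_side T TE a c t'"
proof -
  have "y \<notin> bag a \<inter> bag c \<and> (\<exists>t\<in>T. y \<in> bag t \<and> on_side T TE a c t)"
    using xy
  proof (induction rule: rtrancl_induct)
    case base
    then show ?case using x t by blast
  next
    case (step y z)
    then obtain t where t: "t \<in> T" "y \<in> bag t" "on_side T TE a c t" by blast
    have yz: "E y z" "z \<notin> bag a \<inter> bag c" using step(2) unfolding edges_within_def by auto
    obtain t0 where t0: "t0 \<in> T" "y \<in> bag t0" "z \<in> bag t0" using td_edge[OF td yz(1)] by blast
    have "on_side T TE a c t0" using td_bags_on_side[OF td ac _ t(2) t0(2) t(1) t0(1) t(3)] step(3) by blast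
    then show ?case using yz t0 by blast
  qed
  then show ?thesis using td_bags_on_side[OF td ac] t' by blast
qed

lemma td_bags_meeting_connected_set:
  assumes td: "tree_decomposition V E T TE bag" and W: "connected_set E W"
    and p: "is_path T TE p" and hd: "bag (hd p) \<inter> W \<noteq> {}" and last: "bag (last p) \<inter> W \<noteq> {}"
    and k: "k < length p"
  shows "bag (p ! k) \<inter> W \<noteq> {}"
proof
  assume miss: "bag (p ! k) \<inter> W = {}"
  have tree: "is_tree T TE" using td by (rule td_tree)
  have ne: "p \<noteq> []" using is_path_nonempty[OF p] .
  have "k \<noteq> 0" using miss hd ne by (auto simp: hd_conv_nth)
  then obtain i where ik: "k = Suc i" using not0_implies_Suc by blast
  have i: "Suc i < length p" using ik k by simp
  note cross = path_crosses_edge[OF tree p i]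
  obtain x y where x: "x \<in> bag (hd p)" "x \<in> W" and y: "y \<in> bag (last p)" "y \<in> W"
    using hd last by blast
  have W_avoids: "W \<subseteq> - (bag (p ! i) \<inter> bag (p ! Suc i))" using miss ik by blast
  have reach: "(x, y) \<in> (edges_within E (- (bag (p ! i) \<inter> bag (p ! Suc i))))\<^sup>*"
    using rtrancl_edges_within_mono[OF W_avoids] W x(2) y(2) unfolding connected_set_def by blast
  have x_out: "x \<notin> bag (p ! i) \<inter> bag (p ! Suc i)" using W_avoids x(2) by blast
  have ends: "hd p \<in> T" "last p \<in> T" using is_path_set[OF p] ne by auto
  have "on_side T TE (p ! i) (p ! Suc i) (last p)"
    using td_tree_edge_separates[OF td _ reach x_out ends(1) x(1) _ ends(2) y(1)] cross by blast
  then show False using cross by blast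
qed

section \<open>Fans\<close>

locale fan =
  fixes E :: "'a \<Rightarrow> 'a \<Rightarrow> bool" and V U :: "'a set" and P :: "'a list" and Q :: "'a list set"
  assumes fan_path: "q \<in> Q \<Longrightarrow> is_path V E q"
    and fan_meets_U: "q \<in> Q \<Longrightarrow> set q \<inter> U = {hd q}"
    and fan_meets_P: "q \<in> Q \<Longrightarrow> set q \<inter> set P = {last q}"
    and fan_disjoint: "q \<in> Q \<Longrightarrow> q' \<in> Q \<Longrightarrow> q \<noteq> q' \<Longrightarrow> set q \<inter> set q' \<subseteq> {last q, last q'}"
begin

lemma fan_hd: "q \<in> Q \<Longrightarrow> hd q \<in> U"
  using fan_meets_U by blast

lemma fan_last: "q \<in> Q \<Longrightarrow> last q \<in> set P"
  using fan_meets_P by blast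

lemma fan_singleton_if_hd_in_P:
  assumes "q \<in> Q" "hd q \<in> set P"
  shows "q = [hd q]"
proof -
  have q: "distinct q" "q \<noteq> []" using fan_path[OF assms(1)] unfolding is_path_def by auto
  have "hd q = last q" using fan_meets_P[OF assms(1)] assms(2) hd_in_set[OF q(2)] by blast
  with q show ?thesis by (cases q rule: rev_cases) (auto simp: hd_append split: if_splits)
qed

lemma inj_on_hd: "inj_on hd Q"
proof (rule inj_onI, rule ccontr)
  fix q q' assume q: "q \<in> Q" "q' \<in> Q" "hd q = hd q'" "q \<noteq> q'"
  have ne: "q \<noteq> []" "q' \<noteq> []" using q(1,2) fan_path is_path_nonempty by blast+
  have "hd q \<in> set q \<inter> set q'" using hd_in_set[OF ne(1)] hd_in_set[OF ne(2)] q(3) by simp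
  then have "hd q \<in> {last q, last q'}" using fan_disjoint[OF q(1,2,4)] by blast
  then have "hd q \<in> set P" using fan_last[OF q(1)] fan_last[OF q(2)] by auto
  then have "q = [hd q]" "q' = [hd q']"
    using fan_singleton_if_hd_in_P[OF q(1)] fan_singleton_if_hd_in_P[OF q(2)] q(3) by simp_all
  then show False using q(3,4) by simp
qed

text \<open>Paths of the fan that meet \<open>S\<close> do so away from \<open>P\<close>, hence in distinct vertices; so
  at most \<open>card S\<close> of them are blocked.\<close>
lemma card_heads_avoiding:
  assumes "finite Q" "finite S" "S \<inter> set P = {}"
  shows "card Q \<le> card (hd ` {q\<in>Q. set q \<inter> S = {}}) + card S"
proof -
  let ?B = "{q\<in>Q. set q \<inter> S \<noteq> {}}" and ?G = "{q\<in>Q. set q \<inter> S = {}}"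
  define f where "f q = (SOME s. s \<in> set q \<inter> S)" for q
  have f: "f q \<in> set q \<inter> S" if "q \<in> ?B" for q
  proof -
    have "\<exists>s. s \<in> set q \<inter> S" using that by blast
    then show ?thesis unfolding f_def by (rule someI_ex)
  qed
  have "inj_on f ?B"
  proof (rule inj_onI, rule ccontr)
    fix q q' assume q: "q \<in> ?B" "q' \<in> ?B" "f q = f q'" "q \<noteq> q'"
    then have "f q \<in> set q \<inter> set q'" using f[OF q(1)] f[OF q(2)] by simp
    then have "f q \<in> {last q, last q'}" using fan_disjoint q by blast
    then have "f q \<in> set P" using fan_last q(1,2) by auto
    then show False using f[OF q(1)] assms(3) by blast
  qed
  then have "card ?B \<le> card S" using f assms(2) by (intro card_inj_on_le) auto
  moreover have "card ?G = card (hd ` ?G)"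
    using inj_on_subset[OF inj_on_hd] by (simp add: card_image)
  moreover have "card Q = card ?G + card ?B"
  proof -
    have "Q = ?G \<union> ?B" by blast
    then show ?thesis using assms(1) card_Un_disjoint[of ?G ?B] by auto
  qed
  ultimately show ?thesis by linarith
qed

end

lemma fans_common_head_avoiding:
  assumes fan: "fan E V U P Q" and fan': "fan E V U P' Q'"
    and U: "finite U" "card U = l" and Q: "finite Q" "card Q = l" and Q': "finite Q'" "card Q' = l"
    and S: "finite S" "card S \<le> k" "S \<inter> set P = {}" "S \<inter> set P' = {}" and l: "2 * k < l"
  shows "\<exists>q\<in>Q. \<exists>q'\<in>Q'. hd q = hd q' \<and> set q \<inter> S = {} \<and> set q' \<inter> S = {}"
proof -
  let ?H = "hd ` {q\<in>Q. set q \<inter> S = {}}" and ?H' = "hd ` {q\<in>Q'. set q \<inter> S = {}}"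
  have sub: "?H \<subseteq> U" "?H' \<subseteq> U"
    using fan.fan_hd[OF fan] fan.fan_hd[OF fan'] by blast+
  then have fin: "finite ?H" "finite ?H'" using U(1) finite_subset by blast+
  have "?H \<union> ?H' \<subseteq> U" using sub by (rule Un_least)
  then have "card (?H \<union> ?H') \<le> l" using card_mono[OF U(1)] U(2) by simp
  moreover have "l \<le> card ?H + card S"
    using fan.card_heads_avoiding[OF fan Q(1) S(1,3)] Q(2) by simp
  moreover have "l \<le> card ?H' + card S"
    using fan.card_heads_avoiding[OF fan' Q'(1) S(1,4)] Q'(2) by simp
  ultimately have "card (?H \<inter> ?H') \<noteq> 0" using card_Un_Int[OF fin] S(2) l by linarith
  then have "?H \<inter> ?H' \<noteq> {}" by (metis card.empty)
  then show ?thesis by blast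
qed

lemma fans_connect_avoiding:
  assumes sym: "symp E"
    and P: "is_path V E P" "S \<inter> set P = {}" and P': "is_path V E P'" "S \<inter> set P' = {}"
    and q: "fan E V U P Q" "q \<in> Q" "set q \<inter> S = {}"
    and q': "fan E V U P' Q'" "q' \<in> Q'" "set q' \<inter> S = {}"
    and hd: "hd q = hd q'" and z: "z \<in> set P" and z': "z' \<in> set P'"
  shows "(z, z') \<in> (edges_within E (- S))\<^sup>*"
proof -
  let ?R = "(edges_within E (- S))\<^sup>*"
  have q_path: "is_path V E q" "q \<noteq> []" and q'_path: "is_path V E q'" "q' \<noteq> []"
    using fan.fan_path[OF q(1,2)] fan.fan_path[OF q'(1,2)] is_path_nonempty by blast+
  have avoid: "set P \<subseteq> - S" "set q \<subseteq> - S" "set q' \<subseteq> - S" "set P' \<subseteq> - S"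
    using P(2) q(3) q'(3) P'(2) by blast+
  have "(z, last q) \<in> ?R"
    using path_rtrancl_edges_within[OF P(1) avoid(1) sym z fan.fan_last[OF q(1,2)]] .
  moreover have "(last q, hd q) \<in> ?R"
    using path_rtrancl_edges_within[OF q_path(1) avoid(2) sym] q_path(2) by simp
  moreover have "(hd q', last q') \<in> ?R"
    using path_rtrancl_edges_within[OF q'_path(1) avoid(3) sym] q'_path(2) by simp
  moreover have "(last q', z') \<in> ?R"
    using path_rtrancl_edges_within[OF P'(1) avoid(4) sym fan.fan_last[OF q'(1,2)] z'] .
  ultimately show ?thesis using hd by (metis rtrancl_trans)
qed

lemma td_bag_meets_fanned_paths:
  assumes sym: "symp E" and td: "tree_decomposition V E T TE bag"
    and bags: "\<forall>t\<in>T. finite (bag t) \<and> card (bag t) \<le> w + 1" and l: "2 * (w + 1) < l"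
    and U: "finite U" "card U = l"
    and P: "is_path V E P" and P': "is_path V E P'"
    and Q: "fan E V U P Q" "finite Q" "card Q = l" and Q': "fan E V U P' Q'" "finite Q'" "card Q' = l"
  shows "\<exists>t\<in>T. bag t \<inter> set P \<noteq> {} \<and> bag t \<inter> set P' \<noteq> {}"
proof (rule ccontr)
  assume "\<not> ?thesis"
  then have apart: "\<And>t. t \<in> T \<Longrightarrow> bag t \<inter> set P \<noteq> {} \<Longrightarrow> bag t \<inter> set P' = {}" by blast
  have tree: "is_tree T TE" using td by (rule td_tree)
  have ne: "P \<noteq> []" "P' \<noteq> []" using P P' is_path_nonempty by blast+
  have "hd P \<in> V" "hd P' \<in> V" using is_path_set P P' hd_in_set ne by blast+
  then obtain t1 t2 where t1: "t1 \<in> T" "hd P \<in> bag t1" and t2: "t2 \<in> T" "hd P' \<in> bag t2"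
    using td_cover[OF td] by meson
  have "bag t1 \<inter> set P \<noteq> {}" using t1(2) hd_in_set[OF ne(1)] by blast
  moreover have "bag t2 \<inter> set P = {}" using apart[OF t2(1)] t2(2) hd_in_set[OF ne(2)] by blast
  ultimately obtain a c where ac: "TE a c" "a \<in> T" "bag a \<inter> set P \<noteq> {}" "bag c \<inter> set P = {}"
      and t2_side: "\<not> on_side T TE a c t2"
    using tree_edge_leaving[OF tree t1(1) _ t2(1), where X = "\<lambda>t. bag t \<inter> set P \<noteq> {}"] by auto
  define S where "S = bag a \<inter> bag c"
  have a_bag: "finite (bag a)" "card (bag a) \<le> w + 1" using bags ac(2) by blast+
  have S_sub: "S \<subseteq> bag a" "S \<subseteq> bag c" unfolding S_def by blast+
  have S: "finite S" "card S \<le> w + 1" "S \<inter> set P = {}" "S \<inter> set P' = {}"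
    using finite_subset[OF S_sub(1) a_bag(1)] le_trans[OF card_mono[OF a_bag(1) S_sub(1)] a_bag(2)]
      S_sub ac(4) apart[OF ac(2,3)] by blast+
  obtain q q' where q: "q \<in> Q" "set q \<inter> S = {}" and q': "q' \<in> Q'" "set q' \<inter> S = {}"
    and hd: "hd q = hd q'"
    using fans_common_head_avoiding[OF Q(1) Q'(1) U Q(2,3) Q'(2,3) S l] by blast
  obtain z where z: "z \<in> bag a" "z \<in> set P" using ac(3) by blast
  have "(z, hd P') \<in> (edges_within E (- S))\<^sup>*"
    using fans_connect_avoiding[OF sym P S(3) P' S(4) Q(1) q Q'(1) q' hd z(2) hd_in_set[OF ne(2)]] .
  moreover have "z \<notin> S" using S(3) z(2) by blast
  ultimately have "on_side T TE a c t2"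
    using td_tree_edge_separates[OF td ac(1) _ _ ac(2) z(1) on_side_self[OF tree ac(1)] t2]
    unfolding S_def by blast
  then show False using t2_side by blast
qed

section \<open>Branch sets and the torso\<close>

lemma star_fst_subset: "is_star V E \<sigma> \<Longrightarrow> s \<in> \<sigma> \<Longrightarrow> fst s \<subseteq> V"
  unfolding is_star_def separation_def by (cases s) fastforce

lemma star_fst_subset_snd:
  "is_star V E \<sigma> \<Longrightarrow> s \<in> \<sigma> \<Longrightarrow> s' \<in> \<sigma> \<Longrightarrow> s \<noteq> s' \<Longrightarrow> fst s \<subseteq> snd s'"
  unfolding is_star_def by (cases s, cases s') fastforce

lemma star_int_subset_snd: "v \<in> star_int V \<sigma> \<Longrightarrow> s \<in> \<sigma> \<Longrightarrow> v \<in> snd s"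
  unfolding star_int_def by (cases s) fastforce

locale star_paths =
  fixes V :: "'a set" and E :: "'a \<Rightarrow> 'a \<Rightarrow> bool" and \<sigma> :: "('a set \<times> 'a set) set"
    and P :: "'a set \<times> 'a set \<Rightarrow> 'a \<Rightarrow> 'a list"
  assumes star: "is_star V E \<sigma>"
    and P_path: "s \<in> \<sigma> \<Longrightarrow> x \<in> fst s \<inter> snd s \<Longrightarrow> is_path (fst s) E (P s x)"
    and P_last: "s \<in> \<sigma> \<Longrightarrow> x \<in> fst s \<inter> snd s \<Longrightarrow> last (P s x) = x"
    and P_disjoint: "s \<in> \<sigma> \<Longrightarrow> x \<in> fst s \<inter> snd s \<Longrightarrow> y \<in> fst s \<inter> snd s \<Longrightarrow> x \<noteq> y
      \<Longrightarrow> set (P s x) \<inter> set (P s y) = {}"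
begin

lemma P_ends_in: "s \<in> \<sigma> \<Longrightarrow> x \<in> fst s \<inter> snd s \<Longrightarrow> x \<in> set (P s x)"
  using P_path P_last is_path_nonempty last_in_set by metis

lemma P_meets_snd:
  assumes s: "s \<in> \<sigma>" "x \<in> fst s \<inter> snd s" and z: "z \<in> set (P s x)" "z \<in> snd s"
  shows "z = x"
proof (rule ccontr)
  assume "z \<noteq> x"
  moreover have "z \<in> fst s \<inter> snd s" using is_path_set[OF P_path[OF s]] z by blast
  ultimately show False using P_disjoint[OF s(1) _ s(2)] P_ends_in[OF s(1)] z(1) by blast
qed

lemma P_paths_disjoint:
  assumes s: "s \<in> \<sigma>" "u \<in> fst s \<inter> snd s" and s': "s' \<in> \<sigma>" "v \<in> fst s' \<inter> snd s'" and uv: "u \<noteq> v"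
  shows "set (P s u) \<inter> set (P s' v) = {}"
proof (cases "s = s'")
  case True
  then show ?thesis using P_disjoint[OF s _ uv] s'(2) by blast
next
  case False
  have "fst s \<subseteq> snd s'" "fst s' \<subseteq> snd s"
    using star_fst_subset_snd[OF star] s(1) s'(1) False by auto
  then show ?thesis
    using is_path_set[OF P_path[OF s]] is_path_set[OF P_path[OF s']] P_meets_snd[OF s] P_meets_snd[OF s'] uv
    by blast
qed

definition branch_set :: "'a \<Rightarrow> 'a set" where
  "branch_set v = insert v (\<Union>s\<in>{s\<in>\<sigma>. v \<in> fst s \<inter> snd s}. set (P s v))"

lemma branch_set_cases:
  assumes "z \<in> branch_set v"
  obtains "z = v" | s where "s \<in> \<sigma>" "v \<in> fst s \<inter> snd s" "z \<in> set (P s v)"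
  using assms unfolding branch_set_def by blast

lemma interior_in_branch_set:
  assumes u: "u \<in> star_int V \<sigma>" and uv: "u \<in> branch_set v"
  shows "u = v"
  using uv
proof (cases rule: branch_set_cases)
  case (2 s)
  then show ?thesis using P_meets_snd star_int_subset_snd[OF u 2(1)] by blast
qed

lemma branch_sets_disjoint:
  assumes u: "u \<in> star_int V \<sigma>" and v: "v \<in> star_int V \<sigma>" and uv: "u \<noteq> v"
  shows "branch_set u \<inter> branch_set v = {}"
proof (rule ccontr)
  assume "branch_set u \<inter> branch_set v \<noteq> {}"
  then obtain z where zu: "z \<in> branch_set u" and zv: "z \<in> branch_set v" by blast
  show False
  proof (cases "z = u \<or> z = v")
    case True
    then show False using interior_in_branch_set u v zu zv uv by blast
  next
    case False
    then obtain s s' where "s \<in> \<sigma>" "u \<in> fst s \<inter> snd s" "z \<in> set (P s u)"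
      "s' \<in> \<sigma>" "v \<in> fst s' \<inter> snd s'" "z \<in> set (P s' v)"
      using zu zv by (metis branch_set_cases)
    then show False using P_paths_disjoint uv by blast
  qed
qed

lemma branch_set_connected:
  assumes sym: "symp E"
  shows "connected_set E (branch_set v)"
proof -
  have to_v: "(x, v) \<in> (edges_within E (branch_set v))\<^sup>*" if "x \<in> branch_set v" for x
    using that
  proof (cases rule: branch_set_cases)
    case (2 s)
    have "set (P s v) \<subseteq> branch_set v" unfolding branch_set_def using 2 by blast
    then show ?thesis
      using path_rtrancl_edges_within[OF P_path[OF 2(1,2)] _ sym 2(3) P_ends_in[OF 2(1,2)]] by blast
  qed simp
  show ?thesis
    unfolding connected_set_def
  proof (intro ballI)
    fix x y assume "x \<in> branch_set v" "y \<in> branch_set v"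
    then show "(x, y) \<in> (edges_within E (branch_set v))\<^sup>*"
      using rtrancl_trans[OF to_v rtrancl_edges_within_sym[OF sym to_v]] by blast
  qed
qed

definition torso_bag :: "('t \<Rightarrow> 'a set) \<Rightarrow> 't \<Rightarrow> 'a set" where
  "torso_bag bag t = {v \<in> star_int V \<sigma>. bag t \<inter> branch_set v \<noteq> {}}"

lemma torso_edge_in_torso_bag:
  assumes td: "tree_decomposition V E T TE bag"
    and linked: "\<And>s u v. s \<in> \<sigma> \<Longrightarrow> u \<in> fst s \<inter> snd s \<Longrightarrow> v \<in> fst s \<inter> snd s
      \<Longrightarrow> \<exists>t\<in>T. bag t \<inter> set (P s u) \<noteq> {} \<and> bag t \<inter> set (P s v) \<noteq> {}"
    and uv: "torso_edges V E \<sigma> u v"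
  shows "\<exists>t\<in>T. u \<in> torso_bag bag t \<and> v \<in> torso_bag bag t"
proof -
  have in_int: "u \<in> star_int V \<sigma>" "v \<in> star_int V \<sigma>" using uv unfolding torso_edges_def by blast+
  have own: "x \<in> branch_set x" for x unfolding branch_set_def by blast
  show ?thesis
  proof (cases "E u v")
    case True
    then obtain t where "t \<in> T" "u \<in> bag t" "v \<in> bag t" using td_edge[OF td] by blast
    then show ?thesis using in_int own unfolding torso_bag_def by blast
  next
    case False
    then obtain s where s: "s \<in> \<sigma>" "u \<in> fst s \<inter> snd s" "v \<in> fst s \<inter> snd s"
      using uv unfolding torso_edges_def by auto
    obtain t where "t \<in> T" "bag t \<inter> set (P s u) \<noteq> {}" "bag t \<inter> set (P s v) \<noteq> {}"
      using linked[OF s] by blast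
    moreover have "set (P s u) \<subseteq> branch_set u" "set (P s v) \<subseteq> branch_set v"
      unfolding branch_set_def using s by blast+
    ultimately show ?thesis using in_int unfolding torso_bag_def by blast
  qed
qed

lemma torso_tree_decomposition:
  assumes sym: "symp E" and td: "tree_decomposition V E T TE bag"
    and linked: "\<And>s u v. s \<in> \<sigma> \<Longrightarrow> u \<in> fst s \<inter> snd s \<Longrightarrow> v \<in> fst s \<inter> snd s
      \<Longrightarrow> \<exists>t\<in>T. bag t \<inter> set (P s u) \<noteq> {} \<and> bag t \<inter> set (P s v) \<noteq> {}"
  shows "tree_decomposition (star_int V \<sigma>) (torso_edges V E \<sigma>) T TE (torso_bag bag)"
  unfolding tree_decomposition_def
proof (intro conjI allI impI ballI)
  show "is_tree T TE" using td by (rule td_tree)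
  show "torso_bag bag t \<subseteq> star_int V \<sigma>" for t unfolding torso_bag_def by blast
  show "star_int V \<sigma> = (\<Union>t\<in>T. torso_bag bag t)"
  proof
    show "star_int V \<sigma> \<subseteq> (\<Union>t\<in>T. torso_bag bag t)"
    proof
      fix v assume v: "v \<in> star_int V \<sigma>"
      then have "v \<in> V" unfolding star_int_def by blast
      then obtain t where "t \<in> T" "v \<in> bag t" using td_cover[OF td] by blast
      moreover have "v \<in> branch_set v" unfolding branch_set_def by blast
      ultimately show "v \<in> (\<Union>t\<in>T. torso_bag bag t)" using v unfolding torso_bag_def by blast
    qed
  qed (auto simp: torso_bag_def)
  show "\<exists>t\<in>T. u \<in> torso_bag bag t \<and> v \<in> torso_bag bag t" if "torso_edges V E \<sigma> u v" for u v
    using torso_edge_in_torso_bag[OF td linked that] by blast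
next
  fix p i assume p: "is_path T TE p \<and> i < length p"
  show "torso_bag bag (hd p) \<inter> torso_bag bag (last p) \<subseteq> torso_bag bag (p ! i)"
  proof
    fix v assume "v \<in> torso_bag bag (hd p) \<inter> torso_bag bag (last p)"
    then have v: "v \<in> star_int V \<sigma>" "bag (hd p) \<inter> branch_set v \<noteq> {}" "bag (last p) \<inter> branch_set v \<noteq> {}"
      unfolding torso_bag_def by blast+
    have "bag (p ! i) \<inter> branch_set v \<noteq> {}"
      using td_bags_meeting_connected_set[OF td branch_set_connected[OF sym] _ v(2,3)] p by blast
    then show "v \<in> torso_bag bag (p ! i)" using v(1) unfolding torso_bag_def by blast
  qed
qed

lemma card_torso_bag:
  assumes "finite (bag t)"
  shows "finite (torso_bag bag t) \<and> card (torso_bag bag t) \<le> card (bag t)"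
proof -
  define g where "g v = (SOME z. z \<in> bag t \<inter> branch_set v)" for v
  have g: "g v \<in> bag t \<inter> branch_set v" if "v \<in> torso_bag bag t" for v
  proof -
    have "\<exists>z. z \<in> bag t \<inter> branch_set v" using that unfolding torso_bag_def by blast
    then show ?thesis unfolding g_def by (rule someI_ex)
  qed
  have inj: "inj_on g (torso_bag bag t)"
  proof (rule inj_onI, rule ccontr)
    fix u v assume uv: "u \<in> torso_bag bag t" "v \<in> torso_bag bag t" "g u = g v" "u \<noteq> v"
    have "u \<in> star_int V \<sigma>" "v \<in> star_int V \<sigma>" using uv(1,2) unfolding torso_bag_def by simp_all
    then have "branch_set u \<inter> branch_set v = {}" using branch_sets_disjoint uv(4) by simp
    moreover have "g u \<in> branch_set u" "g u \<in> branch_set v" using g[OF uv(1)] g[OF uv(2)] uv(3) by simp_all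
    ultimately show False by blast
  qed
  have im: "g ` torso_bag bag t \<subseteq> bag t"
    using g by (simp add: image_subset_iff)
  show ?thesis using inj_on_finite[OF inj im assms] card_inj_on_le[OF inj im assms] by simp
qed

end

definition robust_witness ::
  "('a \<Rightarrow> 'a \<Rightarrow> bool) \<Rightarrow> 'a set \<Rightarrow> nat \<Rightarrow> 'a set \<Rightarrow> 'a set \<Rightarrow> 'a set \<Rightarrow> ('a \<Rightarrow> 'a list) \<Rightarrow> bool"
  where "robust_witness E V l A B U P \<longleftrightarrow> finite U \<and> card U = l \<and>
    (\<forall>x\<in>A \<inter> B. is_path A E (P x) \<and> last (P x) = x) \<and>
    (\<forall>x\<in>A \<inter> B. \<forall>y\<in>A \<inter> B. x \<noteq> y \<longrightarrow> set (P x) \<inter> set (P y) = {}) \<and>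
    (\<forall>x\<in>A \<inter> B. \<exists>Q. finite Q \<and> card Q = l \<and> fan E V U (P x) Q)"

lemma left_robust_witness:
  assumes "left_robust E l A B" and "A \<subseteq> V"
  shows "\<exists>U P. robust_witness E V l A B U P"
proof -
  obtain U P where U: "finite U" "card U = l"
    and P: "\<forall>x\<in>A \<inter> B. is_path A E (P x) \<and> last (P x) = x"
    and disj: "\<forall>x\<in>A \<inter> B. \<forall>y\<in>A \<inter> B. x \<noteq> y \<longrightarrow> set (P x) \<inter> set (P y) = {}"
    and Q: "\<forall>x\<in>A \<inter> B. \<exists>Q. finite Q \<and> card Q = l \<and>
        (\<forall>q\<in>Q. is_path ((A - B) \<union> {x}) E q \<and> set q \<inter> U = {hd q} \<and> set q \<inter> set (P x) = {last q}) \<and>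
        (\<forall>q\<in>Q. \<forall>q'\<in>Q. q \<noteq> q' \<longrightarrow> set q \<inter> set q' \<subseteq> {last q, last q'})"
    using assms(1) unfolding left_robust_def by (elim exE conjE) simp
  have "\<exists>Q. finite Q \<and> card Q = l \<and> fan E V U (P x) Q" if x: "x \<in> A \<inter> B" for x
  proof -
    obtain Q where Q_card: "finite Q" "card Q = l"
      and Q_paths: "\<forall>q\<in>Q. is_path ((A - B) \<union> {x}) E q \<and> set q \<inter> U = {hd q} \<and> set q \<inter> set (P x) = {last q}"
      and Q_disj: "\<forall>q\<in>Q. \<forall>q'\<in>Q. q \<noteq> q' \<longrightarrow> set q \<inter> set q' \<subseteq> {last q, last q'}"
      using bspec[OF Q x] by (elim exE conjE) simp
    have sub: "(A - B) \<union> {x} \<subseteq> V" using assms(2) x by blast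
    have "fan E V U (P x) Q"
    proof
      fix q assume "q \<in> Q"
      then have "is_path ((A - B) \<union> {x}) E q" using Q_paths by simp
      then show "is_path V E q" using is_path_mono[OF _ order_trans[OF is_path_set sub]] by blast
    next
      fix q assume "q \<in> Q"
      then show "set q \<inter> U = {hd q}" using Q_paths by simp
    next
      fix q assume "q \<in> Q"
      then show "set q \<inter> set (P x) = {last q}" using Q_paths by simp
    next
      fix q q' assume "q \<in> Q" "q' \<in> Q" "q \<noteq> q'"
      then show "set q \<inter> set q' \<subseteq> {last q, last q'}" using Q_disj by simp
    qed
    then show ?thesis using Q_card by blast
  qed
  then have "robust_witness E V l A B U P" using U P disj unfolding robust_witness_def by simp
  then show ?thesis by blast
qed

lemma robust_star_paths:
  assumes star: "is_star V E \<sigma>" and robust: "\<forall>(A, B)\<in>\<sigma>. left_robust E l A B"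
  obtains U P where "star_paths V E \<sigma> P"
    and "\<And>s. s \<in> \<sigma> \<Longrightarrow> robust_witness E V l (fst s) (snd s) (U s) (P s)"
proof -
  have "left_robust E l (fst s) (snd s)" if "s \<in> \<sigma>" for s using robust that by (cases s) auto
  then have "\<forall>s\<in>\<sigma>. \<exists>U P. robust_witness E V l (fst s) (snd s) U P"
    using left_robust_witness star_fst_subset[OF star] by blast
  then obtain U where "\<forall>s\<in>\<sigma>. \<exists>P. robust_witness E V l (fst s) (snd s) (U s) P"
    by (rule bchoice[elim_format]) blast
  then obtain P where witness: "\<forall>s\<in>\<sigma>. robust_witness E V l (fst s) (snd s) (U s) (P s)"
    by (rule bchoice[elim_format]) blast
  have "star_paths V E \<sigma> P"
    by unfold_locales (use star witness in \<open>auto simp: robust_witness_def\<close>)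
  then show ?thesis using that witness by blast
qed

lemma robust_star_torso_decomposition:
  assumes sym: "symp E" and td: "tree_decomposition V E T TE bag"
    and bags: "\<forall>t\<in>T. finite (bag t) \<and> card (bag t) \<le> w + 1"
    and star: "is_star V E \<sigma>" and robust: "\<forall>(A, B)\<in>\<sigma>. left_robust E l A B" and l: "2 * (w + 1) < l"
  obtains bag' where "tree_decomposition (star_int V \<sigma>) (torso_edges V E \<sigma>) T TE bag'"
    and "\<forall>t\<in>T. finite (bag' t) \<and> card (bag' t) \<le> w + 1"
proof -
  obtain U P where "star_paths V E \<sigma> P"
    and witness: "\<And>s. s \<in> \<sigma> \<Longrightarrow> robust_witness E V l (fst s) (snd s) (U s) (P s)"
    using robust_star_paths[OF star robust] by blast
  then interpret star_paths V E \<sigma> P by simp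
  have U: "finite (U s)" "card (U s) = l" if "s \<in> \<sigma>" for s
    using witness[OF that] unfolding robust_witness_def by simp_all
  have fans: "\<exists>Q. finite Q \<and> card Q = l \<and> fan E V (U s) (P s x) Q" if "s \<in> \<sigma>" "x \<in> fst s \<inter> snd s" for s x
    using witness[OF that(1)] that(2) unfolding robust_witness_def by simp
  have "\<exists>t\<in>T. bag t \<inter> set (P s u) \<noteq> {} \<and> bag t \<inter> set (P s v) \<noteq> {}"
    if s: "s \<in> \<sigma>" "u \<in> fst s \<inter> snd s" "v \<in> fst s \<inter> snd s" for s u v
  proof -
    have paths: "is_path V E (P s u)" "is_path V E (P s v)"
      using is_path_mono[OF P_path order_trans[OF is_path_set[OF P_path] star_fst_subset[OF star s(1)]]] s
      by blast+
    obtain Q Q' where Q: "fan E V (U s) (P s u) Q" "finite Q" "card Q = l"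
      and Q': "fan E V (U s) (P s v) Q'" "finite Q'" "card Q' = l"
      using fans[OF s(1,2)] fans[OF s(1,3)] by blast
    show ?thesis using td_bag_meets_fanned_paths[OF sym td bags l U[OF s(1)] paths Q Q'] .
  qed
  then have "tree_decomposition (star_int V \<sigma>) (torso_edges V E \<sigma>) T TE (torso_bag bag)"
    by (rule torso_tree_decomposition[OF sym td])
  moreover have "finite (torso_bag bag t) \<and> card (torso_bag bag t) \<le> w + 1" if "t \<in> T" for t
    using card_torso_bag[of bag t] bags that by fastforce
  ultimately show ?thesis using that by blast
qed

section \<open>Finite subtrees and renaming of nodes\<close>

lemma tree_path_prefix:
  assumes tree: "is_tree T TE" and f: "r \<in> T" "f \<in> T" and s: "s \<in> set (tree_path T TE r f)"
  shows "set (tree_path T TE r s) \<subseteq> set (tree_path T TE r f)"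
proof -
  let ?p = "tree_path T TE r f"
  have p: "is_path T TE ?p" "hd ?p = r" using tree_path[OF tree f] by auto
  obtain k where k: "k < length ?p" "?p ! k = s" using s by (auto simp: in_set_conv_nth)
  have prefix: "is_path T TE (take (Suc k) ?p)" using is_path_take[OF p(1)] by simp
  have "hd (take (Suc k) ?p) = r" using p(2) by simp
  moreover have "last (take (Suc k) ?p) = s" using k by (simp add: take_Suc_conv_app_nth)
  ultimately have "tree_path T TE r s = take (Suc k) ?p" using tree_path_unique[OF tree prefix] by blast
  then show ?thesis by (simp add: set_take_subset)
qed

text \<open>A set of nodes containing, with each node, its path to a root \<open>r\<close> is convex: if a path
  left it through an edge \<open>ac\<close>, both ends would lie on the side of \<open>r\<close>.\<close>
lemma convex_if_closed_under_root_paths: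
  assumes tree: "is_tree T TE" and S: "S \<subseteq> T" "r \<in> S"
    and root_paths: "\<And>s. s \<in> S \<Longrightarrow> set (tree_path T TE r s) \<subseteq> S"
    and p: "is_path T TE p" "hd p \<in> S" "last p \<in> S"
  shows "set p \<subseteq> S"
proof (rule ccontr)
  assume "\<not> set p \<subseteq> S"
  then obtain k where k: "k < length p" "p ! k \<notin> S" by (metis in_set_conv_nth subsetI)
  have "k \<noteq> 0"
  proof
    assume "k = 0"
    then show False using k(2) p(2) is_path_nonempty[OF p(1)] by (simp add: hd_conv_nth)
  qed
  then obtain i where i: "k = Suc i" using not0_implies_Suc by blast
  then have "Suc i < length p" using k(1) by simp
  note cross = path_crosses_edge[OF tree p(1) this]
  have same_side: "on_side T TE (p ! i) (p ! Suc i) s \<longleftrightarrow> on_side T TE (p ! i) (p ! Suc i) r"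
    if "s \<in> S" for s
  proof -
    let ?q = "tree_path T TE r s"
    have q: "is_path T TE ?q" "hd ?q = r" "last ?q = s" using tree_path[OF tree] S that by blast+
    have "p ! Suc i \<notin> set ?q" using root_paths[OF that] k(2) i by blast
    then show ?thesis using on_side_path_iff[OF tree conjunct1[OF cross] q(1)] q(2,3) by simp
  qed
  show False using same_side[OF p(2)] same_side[OF p(3)] cross by blast
qed

lemma tree_restrict_convex:
  assumes tree: "is_tree T TE" and S: "S \<subseteq> T" "S \<noteq> {}"
    and convex: "\<And>p. is_path T TE p \<Longrightarrow> hd p \<in> S \<Longrightarrow> last p \<in> S \<Longrightarrow> set p \<subseteq> S"
  shows "is_tree S (\<lambda>u v. TE u v \<and> u \<in> S \<and> v \<in> S)"
  unfolding is_tree_def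
proof (intro conjI ballI)
  show "graph S (\<lambda>u v. TE u v \<and> u \<in> S \<and> v \<in> S)"
    using tree unfolding is_tree_def graph_def by blast
  show "S \<noteq> {}" by (rule S(2))
  fix u v assume uv: "u \<in> S" "v \<in> S"
  let ?q = "tree_path T TE u v"
  have q: "is_path T TE ?q" "hd ?q = u" "last ?q = v" using tree_path[OF tree] uv S(1) by blast+
  show "\<exists>!p. is_path S (\<lambda>u v. TE u v \<and> u \<in> S \<and> v \<in> S) p \<and> hd p = u \<and> last p = v"
  proof (rule ex1I)
    have "set ?q \<subseteq> S" using convex[OF q(1)] q uv by simp
    then show "is_path S (\<lambda>u v. TE u v \<and> u \<in> S \<and> v \<in> S) ?q \<and> hd ?q = u \<and> last ?q = v"
      using is_path_restrict[OF S(1)] q by blast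
  next
    fix p assume p: "is_path S (\<lambda>u v. TE u v \<and> u \<in> S \<and> v \<in> S) p \<and> hd p = u \<and> last p = v"
    then have "is_path T TE p" using is_path_restrict[OF S(1)] by blast
    then show "p = ?q" using tree_path_unique[OF tree] p by simp
  qed
qed

lemma td_restrict_convex:
  assumes td: "tree_decomposition V E T TE bag" and S: "S \<subseteq> T" "S \<noteq> {}"
    and convex: "\<And>p. is_path T TE p \<Longrightarrow> hd p \<in> S \<Longrightarrow> last p \<in> S \<Longrightarrow> set p \<subseteq> S"
    and cover: "\<And>v. v \<in> V \<Longrightarrow> \<exists>t\<in>S. v \<in> bag t"
    and edges: "\<And>u v. E u v \<Longrightarrow> \<exists>t\<in>S. u \<in> bag t \<and> v \<in> bag t"
  shows "tree_decomposition V E S (\<lambda>u v. TE u v \<and> u \<in> S \<and> v \<in> S) bag"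
  unfolding tree_decomposition_def
proof (intro conjI allI impI ballI)
  show "is_tree S (\<lambda>u v. TE u v \<and> u \<in> S \<and> v \<in> S)"
    using tree_restrict_convex[OF td_tree[OF td] S convex] .
  show "bag t \<subseteq> V" if "t \<in> S" for t using td_bag_subset[OF td] that S(1) by blast
  show "V = (\<Union>t\<in>S. bag t)"
  proof
    show "V \<subseteq> (\<Union>t\<in>S. bag t)" using cover by blast
    show "(\<Union>t\<in>S. bag t) \<subseteq> V" using td_bag_subset[OF td] S(1) by blast
  qed
  show "\<exists>t\<in>S. u \<in> bag t \<and> v \<in> bag t" if "E u v" for u v using edges that .
next
  fix p i assume "is_path S (\<lambda>u v. TE u v \<and> u \<in> S \<and> v \<in> S) p \<and> i < length p"
  then show "bag (hd p) \<inter> bag (last p) \<subseteq> bag (p ! i)"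
    using is_path_restrict[OF S(1)] td_path_bag[OF td] by blast
qed

lemma td_finite_node_cover:
  assumes td: "tree_decomposition V E T TE bag" and V: "finite V"
    and E_in: "\<And>u v. E u v \<Longrightarrow> u \<in> V \<and> v \<in> V"
  obtains F where "finite F" "F \<subseteq> T" "\<And>v. v \<in> V \<Longrightarrow> \<exists>t\<in>F. v \<in> bag t"
    "\<And>u v. E u v \<Longrightarrow> \<exists>t\<in>F. u \<in> bag t \<and> v \<in> bag t"
proof -
  define Ed where "Ed = {(u, v). E u v}"
  have "Ed \<subseteq> V \<times> V" using E_in unfolding Ed_def by auto
  then have Ed: "finite Ed" using V finite_subset by blast
  have node_ex: "\<forall>v\<in>V. \<exists>t. t \<in> T \<and> v \<in> bag t" using td_cover[OF td] by blast
  obtain node_of where node_of: "\<forall>v\<in>V. node_of v \<in> T \<and> v \<in> bag (node_of v)"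
    using bchoice[OF node_ex] by blast
  have edge_node_ex: "\<forall>e\<in>Ed. \<exists>t. t \<in> T \<and> fst e \<in> bag t \<and> snd e \<in> bag t"
    using td_edge[OF td] unfolding Ed_def by auto
  obtain node_of_edge where node_of_edge:
      "\<forall>e\<in>Ed. node_of_edge e \<in> T \<and> fst e \<in> bag (node_of_edge e) \<and> snd e \<in> bag (node_of_edge e)"
    using bchoice[OF edge_node_ex] by blast
  show ?thesis
  proof
    show "finite (node_of ` V \<union> node_of_edge ` Ed)" using V Ed by simp
    show "node_of ` V \<union> node_of_edge ` Ed \<subseteq> T" using node_of node_of_edge by blast
    show "\<exists>t\<in>node_of ` V \<union> node_of_edge ` Ed. v \<in> bag t" if "v \<in> V" for v
      using node_of that by blast
    show "\<exists>t\<in>node_of ` V \<union> node_of_edge ` Ed. u \<in> bag t \<and> v \<in> bag t" if "E u v" for u v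
    proof -
      have "(u, v) \<in> Ed" using that unfolding Ed_def by simp
      then show ?thesis using node_of_edge by force
    qed
  qed
qed

lemma td_finite_subtree:
  assumes td: "tree_decomposition V E T TE bag" and V: "finite V"
    and E_in: "\<And>u v. E u v \<Longrightarrow> u \<in> V \<and> v \<in> V"
  obtains S where "S \<subseteq> T" "finite S" "tree_decomposition V E S (\<lambda>u v. TE u v \<and> u \<in> S \<and> v \<in> S) bag"
proof -
  have tree: "is_tree T TE" using td by (rule td_tree)
  obtain r where r: "r \<in> T" using tree unfolding is_tree_def by blast
  obtain F where F: "finite F" "F \<subseteq> T" and cover: "\<And>v. v \<in> V \<Longrightarrow> \<exists>t\<in>F. v \<in> bag t"
    and edges: "\<And>u v. E u v \<Longrightarrow> \<exists>t\<in>F. u \<in> bag t \<and> v \<in> bag t"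
    using td_finite_node_cover[OF td V E_in] by blast
  define S where "S = (\<Union>f\<in>insert r F. set (tree_path T TE r f))"
  have path_to: "is_path T TE (tree_path T TE r f) \<and> last (tree_path T TE r f) = f" if "f \<in> insert r F" for f
    using tree_path[OF tree r] F(2) r that by blast
  have in_S: "f \<in> S" if "f \<in> insert r F" for f
  proof -
    have "tree_path T TE r f \<noteq> []" using is_path_nonempty path_to[OF that] by blast
    then have "f \<in> set (tree_path T TE r f)" using path_to[OF that] last_in_set by metis
    then show ?thesis using that unfolding S_def by blast
  qed
  have S_sub: "S \<subseteq> T"
    unfolding S_def using is_path_set[OF conjunct1[OF path_to]] by blast
  have root_paths: "set (tree_path T TE r s) \<subseteq> S" if "s \<in> S" for s
  proof -
    obtain f where f: "f \<in> insert r F" "s \<in> set (tree_path T TE r f)" using \<open>s \<in> S\<close> unfolding S_def by blast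
    then have "set (tree_path T TE r s) \<subseteq> set (tree_path T TE r f)"
      using tree_path_prefix[OF tree r] F(2) r by blast
    then show ?thesis using f(1) unfolding S_def by blast
  qed
  show ?thesis
  proof
    show "S \<subseteq> T" "finite S" using S_sub F(1) unfolding S_def by auto
    show "tree_decomposition V E S (\<lambda>u v. TE u v \<and> u \<in> S \<and> v \<in> S) bag"
    proof (rule td_restrict_convex[OF td S_sub])
      show "S \<noteq> {}" using in_S by blast
      show "set p \<subseteq> S" if "is_path T TE p" "hd p \<in> S" "last p \<in> S" for p
        using convex_if_closed_under_root_paths[OF tree S_sub in_S root_paths that] by blast
      show "\<exists>t\<in>S. v \<in> bag t" if "v \<in> V" for v using cover[OF that] in_S by blast
      show "\<exists>t\<in>S. u \<in> bag t \<and> v \<in> bag t" if "E u v" for u v using edges[OF that] in_S by blast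
    qed
  qed
qed

lemma is_path_pullback:
  assumes h: "bij_betw h N S" and p: "is_path N (\<lambda>i j. i \<in> N \<and> j \<in> N \<and> TE (h i) (h j)) p"
  shows "is_path S TE (map h p)"
proof -
  have "is_path (h ` N) TE (map h p)"
    by (rule is_path_map[OF p bij_betw_imp_inj_on[OF h]]) simp
  then show ?thesis using bij_betw_imp_surj_on[OF h] by simp
qed

lemma is_path_pullback_inv:
  assumes h: "bij_betw h N S" and q: "is_path S TE q"
  shows "is_path N (\<lambda>i j. i \<in> N \<and> j \<in> N \<and> TE (h i) (h j)) (map (inv_into N h) q)"
proof -
  have g: "bij_betw (inv_into N h) S N" using bij_betw_inv_into[OF h] .
  have h_g: "h (inv_into N h s) = s" if "s \<in> S" for s
    using f_inv_into_f[of s h N] bij_betw_imp_surj_on[OF h] that by blast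
  have "is_path (inv_into N h ` S) (\<lambda>i j. i \<in> N \<and> j \<in> N \<and> TE (h i) (h j)) (map (inv_into N h) q)"
    by (rule is_path_map[OF q bij_betw_imp_inj_on[OF g]])
      (use bij_betw_imp_surj_on[OF g] h_g in auto)
  then show ?thesis using bij_betw_imp_surj_on[OF g] by simp
qed

lemma tree_pullback:
  assumes tree: "is_tree S TE" and h: "bij_betw h N S"
  shows "is_tree N (\<lambda>i j. i \<in> N \<and> j \<in> N \<and> TE (h i) (h j))" (is "is_tree N ?TE")
  unfolding is_tree_def
proof (intro conjI ballI)
  let ?g = "inv_into N h"
  have inj: "inj_on h N" and img: "h ` N = S" using h unfolding bij_betw_def by auto
  show "graph N ?TE"
    unfolding graph_def
  proof (intro allI impI)
    fix i j assume ij: "?TE i j"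
    then have "h i \<noteq> h j" "TE (h j) (h i)" using tree_edge_in[OF tree] tree_edge_sym[OF tree] by blast+
    then show "i \<in> N \<and> j \<in> N \<and> i \<noteq> j \<and> ?TE j i" using ij by auto
  qed
  show "N \<noteq> {}" using tree img unfolding is_tree_def by blast
  fix u v assume uv: "u \<in> N" "v \<in> N"
  let ?q = "tree_path S TE (h u) (h v)"
  have q: "is_path S TE ?q" "hd ?q = h u" "last ?q = h v" using tree_path[OF tree] uv img by blast+
  have q_ne: "?q \<noteq> []" using is_path_nonempty[OF q(1)] .
  note q_pulled = is_path_pullback_inv[OF h q(1)]
  show "\<exists>!p. is_path N ?TE p \<and> hd p = u \<and> last p = v"
  proof (rule ex1I)
    show "is_path N ?TE (map ?g ?q) \<and> hd (map ?g ?q) = u \<and> last (map ?g ?q) = v"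
      using q_pulled q(2,3) q_ne inv_into_f_f[OF inj] uv by (simp add: hd_map last_map)
  next
    fix p assume p: "is_path N ?TE p \<and> hd p = u \<and> last p = v"
    have ends: "hd (map h p) = h u" "last (map h p) = h v"
      using p is_path_nonempty by (fastforce simp: hd_map last_map)+
    have "map h p = ?q"
      using tree_path_unique[OF tree is_path_pullback[OF h conjunct1[OF p]] ends] by simp
    moreover have "map h (map ?g ?q) = ?q"
      using is_path_set[OF q(1)] f_inv_into_f[of _ h N] img by (simp add: map_idI subset_iff)
    moreover have "inj_on h (set p \<union> set (map ?g ?q))"
      using inj_on_subset[OF inj] is_path_set[OF conjunct1[OF p]] is_path_set[OF q_pulled] by (metis Un_least)
    ultimately show "p = map ?g ?q" using inj_on_map_eq_map by metis
  qed
qed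

lemma td_pullback:
  assumes td: "tree_decomposition V E S TE bag" and h: "bij_betw h N S"
  shows "tree_decomposition V E N (\<lambda>i j. i \<in> N \<and> j \<in> N \<and> TE (h i) (h j)) (bag \<circ> h)"
  unfolding tree_decomposition_def
proof (intro conjI allI impI ballI)
  have img: "h ` N = S" using h unfolding bij_betw_def by auto
  show "is_tree N (\<lambda>i j. i \<in> N \<and> j \<in> N \<and> TE (h i) (h j))"
    using tree_pullback[OF td_tree[OF td] h] .
  show "(bag \<circ> h) i \<subseteq> V" if "i \<in> N" for i using td_bag_subset[OF td] img that by auto
  show "V = (\<Union>i\<in>N. (bag \<circ> h) i)" using td img unfolding tree_decomposition_def by auto
  show "\<exists>i\<in>N. u \<in> (bag \<circ> h) i \<and> v \<in> (bag \<circ> h) i" if "E u v" for u v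
    using td_edge[OF td that] img by auto
next
  fix p i assume p: "is_path N (\<lambda>i j. i \<in> N \<and> j \<in> N \<and> TE (h i) (h j)) p \<and> i < length p"
  then have "bag (hd (map h p)) \<inter> bag (last (map h p)) \<subseteq> bag (map h p ! i)"
    using td_path_bag[OF td is_path_pullback[OF h]] by auto
  moreover have "p \<noteq> []" using p is_path_nonempty by blast
  ultimately show "(bag \<circ> h) (hd p) \<inter> (bag \<circ> h) (last p) \<subseteq> (bag \<circ> h) (p ! i)"
    using p by (simp add: hd_map last_map)
qed

lemma treewidth_le_nat_if_finite_tree:
  assumes td: "tree_decomposition V E S TE bag" and S: "finite S"
    and bags: "\<forall>t\<in>S. finite (bag t) \<and> card (bag t) \<le> w + 1"
  shows "treewidth_le TYPE(nat) V E w"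
proof -
  obtain h where h: "bij_betw h {0..<card S} S" using ex_bij_betw_nat_finite[OF S] by blast
  have "\<forall>i\<in>{0..<card S}. finite ((bag \<circ> h) i) \<and> card ((bag \<circ> h) i) \<le> w + 1"
    using bags bij_betwE[OF h] by auto
  then show ?thesis using td_pullback[OF td h] unfolding treewidth_le_def by blast
qed

theorem corollary6p3:
  fixes V :: "'a set" and E :: "'a \<Rightarrow> 'a \<Rightarrow> bool"
    and \<sigma> :: "('a set \<times> 'a set) set" and w :: nat
  assumes "graph V E"
    and "treewidth_le TYPE('t) V E w"
    and "is_star V E \<sigma>" and "finite \<sigma>"
    and "\<forall>s\<in>\<sigma>. sep_order s \<le> w + 1"
    and "finite (star_int V \<sigma>)"
    and "\<forall>(A,B)\<in>\<sigma>. left_robust E ((w+1)^2 * (w+2) + w + 1) A B"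
  shows "treewidth_le TYPE(nat) (star_int V \<sigma>) (torso_edges V E \<sigma>) w"
proof -
  obtain T :: "'t set" and TE bag where td: "tree_decomposition V E T TE bag"
    and bags: "\<forall>t\<in>T. finite (bag t) \<and> card (bag t) \<le> w + 1"
    using assms(2) unfolding treewidth_le_def by blast
  have sym: "symp E" using assms(1) unfolding graph_def symp_def by blast
  have l: "2 * (w + 1) < (w + 1)^2 * (w + 2) + w + 1" by (simp add: power2_eq_square algebra_simps)
  obtain bag' where td': "tree_decomposition (star_int V \<sigma>) (torso_edges V E \<sigma>) T TE bag'"
    and bags': "\<forall>t\<in>T. finite (bag' t) \<and> card (bag' t) \<le> w + 1"
    using robust_star_torso_decomposition[OF sym td bags assms(3,7) l] by blast
  obtain S where "S \<subseteq> T" "finite S"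
    "tree_decomposition (star_int V \<sigma>) (torso_edges V E \<sigma>) S (\<lambda>u v. TE u v \<and> u \<in> S \<and> v \<in> S) bag'"
    using td_finite_subtree[OF td' assms(6)] unfolding torso_edges_def by blast
  then show ?thesis using treewidth_le_nat_if_finite_tree bags' by blast
qed

end
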